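(* Let $\sigma>0$, $n\ge 1$, and let $\{z_k\}_{k=1}^n$ and $\{h_k\}_{k=1}^n$ be the points and weights of the $n$-point Gauss--Hermite quadrature with respect to the standard normal density, i.e. $z_k$ are the roots of the probabilists' Hermite polynomial $He_n$ and the $h_k$ are such that $\sum_{k=1}^n h_k q(z_k)=\int_{-\infty}^\infty q(z)n(z)\,dz$ for every polynomial $q$ of degree at most $2n-1$. Set $x_k=\phi_\sigma^{-1}(z_k)$ and $G_m(x)=He_m(\phi_\sigma(x))$ for $m\ge 0$, and let $w(x)=f_{\mathrm{IG}}(x\,|\,\sigma,\sigma)\,\frac{1+x}{2}$ on $(0,\infty)$. Then the points $\{x_k\}$ with weights $\{h_k\}$ form a numerical quadrature with respect to $w$ on $(0,\infty)$ whose associated orthogonal functions are the $G_m$: namely, $\int_0^\infty G_m(x)G_{m'}(x)w(x)\,dx = m!\,\delta_{mm'}$ for all $m,m'\ge0$; the $x_k$ are the roots of $G_n$; $h_k=\frac{\phi_\sigma'(x_k)}{G_n'(x_k)}\int_0^\infty \frac{G_n(x)}{\phi_\sigma(x)-\phi_\sigma(x_k)}w(x)\,dx$; and $\int_0^\infty g(x)w(x)\,dx=\sum_{k=1}^n h_k\,g(x_k)$ for every function $g$ on $(0,\infty)$ such that $g\circ\phi_\sigma^{-1}$ is a polynomial of degree at most $2n-1$.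
   Context: $n(z)=e^{-z^2/2}/\sqrt{2\pi}$ is the standard normal density and $He_m$ are the probabilists' Hermite polynomials (orthogonal w.r.t. $n(z)$, with $\int He_m He_{m'} n\,dz=m!\,\delta_{mm'}$). The inverse Gaussian density is $f_{\mathrm{IG}}(x\,|\,\gamma,\delta)=\frac{\delta}{\sqrt{2\pi x^3}}\exp\left(-\frac{(\gamma x-\delta)^2}{2x}\right)$ for $x>0$. The map $\phi_\sigma(x)=\sigma\left(\sqrt{x}-\frac{1}{\sqrt{x}}\right)$ is an increasing bijection $(0,\infty)\to\mathbb{R}$ with inverse $\phi_\sigma^{-1}(z)=1+\frac{z^2}{2\sigma^2}+\frac{z}{\sigma}\sqrt{1+\frac{z^2}{4\sigma^2}}$. *)

theory Defs
  imports "HOL-Analysis.Analysis" "HOL-Computational_Algebra.Polynomial"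
begin

fun He :: "nat \<Rightarrow> real poly" where
  "He 0 = 1"
| "He (Suc 0) = [:0, 1:]"
| "He (Suc (Suc k)) = [:0, 1:] * He (Suc k) - smult (real (Suc k)) (He k)"

definition ndens :: "real \<Rightarrow> real" where
  "ndens z = exp (- (z^2) / 2) / sqrt (2 * pi)"

definition f_IG :: "real \<Rightarrow> real \<Rightarrow> real \<Rightarrow> real" where
  "f_IG x \<gamma> \<delta> = \<delta> / sqrt (2 * pi * x^3) * exp (- ((\<gamma> * x - \<delta>)^2) / (2 * x))"

definition phi :: "real \<Rightarrow> real \<Rightarrow> real" where
  "phi \<sigma> x = \<sigma> * (sqrt x - 1 / sqrt x)"

definition phi_inv :: "real \<Rightarrow> real \<Rightarrow> real" where
  "phi_inv \<sigma> z = 1 + z^2 / (2 * \<sigma>^2) + z / \<sigma> * sqrt (1 + z^2 / (4 * \<sigma>^2))"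

definition G :: "real \<Rightarrow> nat \<Rightarrow> real \<Rightarrow> real" where
  "G \<sigma> m x = poly (He m) (phi \<sigma> x)"

definition wt :: "real \<Rightarrow> real \<Rightarrow> real" where
  "wt \<sigma> x = f_IG x \<sigma> \<sigma> * (1 + x) / 2"

end

theory Submission
  imports Defs "HOL-Probability.Distributions"
begin

text \<open>
  On \<open>(0,\<infinity>)\<close> the weight factors as \<open>w = \<phi>\<^sub>\<sigma>' \<cdot> (n \<circ> \<phi>\<^sub>\<sigma>)\<close>, so the substitution
  \<open>z = \<phi>\<^sub>\<sigma>(x)\<close> turns \<open>\<integral> q(\<phi>\<^sub>\<sigma>(x)) w(x) dx\<close> into the Gaussian expectation
  \<open>E[q(Z)]\<close> of a polynomial. Every claim is thus the pull-back of a fact about the standard normal: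
  orthogonality of the \<open>He\<^sub>m\<close>, which is Stein's identity \<open>E[Z p(Z)] = E[p'(Z)]\<close> applied
  \<open>m\<close> times, and the classical properties of Gauss quadrature (distinct nodes, and the weight
  \<open>h\<^sub>k = E[He\<^sub>n(Z)/(Z - z\<^sub>k)] / He\<^sub>n'(z\<^sub>k)\<close>), which follow from exactness up to
  degree \<open>2n - 1\<close> together with \<open>E[p(Z)\<^sup>2] > 0\<close> for \<open>p \<noteq> 0\<close>.
\<close>

section \<open>Hermite polynomials\<close>

lemma He_degree_coeff: "degree (He m) = m \<and> coeff (He m) m = 1"
proof (induction m rule: He.induct)
  case (3 k)
  have "He (Suc k) \<noteq> 0"
    using 3 by (metis one_neq_zero coeff_0)
  then have lead: "degree ([:0, 1:] * He (Suc k)) = Suc (Suc k)"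
      "coeff ([:0, 1:] * He (Suc k)) (Suc (Suc k)) = 1"
    using 3 by (simp_all add: degree_mult_eq coeff_pCons)
  have low: "degree (smult (real (Suc k)) (He k)) < Suc (Suc k)"
    using 3 by simp
  have "degree (He (Suc (Suc k))) = Suc (Suc k)"
    using lead low by (metis He.simps(3) diff_conv_add_uminus degree_add_eq_left degree_minus)
  moreover have "coeff (He (Suc (Suc k))) (Suc (Suc k)) = 1"
    using lead low by (simp add: coeff_eq_0)
  ultimately show ?case by simp
qed simp_all

lemma degree_He: "degree (He m) = m"
  using He_degree_coeff by blast

lemma coeff_He_self: "coeff (He m) m = 1"
  using He_degree_coeff by blast

lemma pderiv_He: "pderiv (He (Suc m)) = smult (real (Suc m)) (He m)"
proof (induction m rule: He.induct)
  case 1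
  then show ?case by (simp add: pderiv_pCons)
next
  case 2
  then show ?case by (simp add: pderiv_pCons pderiv_mult pderiv_diff numeral_2_eq_2 algebra_simps)
next
  case (3 k)
  let ?X = "[:0, 1:] :: real poly"
  have "pderiv (He (Suc (Suc (Suc k))))
      = He (Suc (Suc k)) + ?X * pderiv (He (Suc (Suc k))) - smult (real (Suc (Suc k))) (pderiv (He (Suc k)))"
    by (simp only: He.simps(3)[of "Suc k"] pderiv_diff pderiv_mult pderiv_smult) (simp add: pderiv_pCons)
  also have "\<dots> = He (Suc (Suc k)) + smult (real (Suc (Suc k))) (?X * He (Suc k) - smult (real (Suc k)) (He k))"
    using 3 by (simp add: smult_diff_right algebra_simps del: He.simps)
  also have "\<dots> = He (Suc (Suc k)) + smult (real (Suc (Suc k))) (He (Suc (Suc k)))"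
    by (simp only: He.simps(3))
  also have "\<dots> = smult (real (Suc (Suc (Suc k)))) (He (Suc (Suc k)))"
    by (metis add.commute of_nat_Suc smult_1_left smult_add_left)
  finally show ?case .
qed

lemma He_Suc: "He (Suc m) = [:0, 1:] * He m - pderiv (He m)"
  by (cases m) (simp_all add: pderiv_He)

section \<open>Gaussian expectation of polynomials\<close>

lemma std_normal_moment_Suc_Suc:
  "(\<integral>x. std_normal_density x * x ^ Suc (Suc i) \<partial>lborel)
     = Suc i * (\<integral>x. std_normal_density x * x ^ i \<partial>lborel)"
proof (cases "even i")
  case True
  then obtain k where k: "i = 2 * k" by (auto elim: evenE)
  have "Suc (Suc i) = 2 * Suc k" using k by simp
  then have "(\<integral>x. std_normal_density x * x ^ Suc (Suc i) \<partial>lborel)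
      = fact (2 * Suc k) / (2 ^ Suc k * fact (Suc k))"
    by (simp only: integral_std_normal_moment_even)
  also have "\<dots> = (2 * real k + 1) * fact (2 * k) * (2 * (real k + 1))
                      / (2 ^ k * fact k * (2 * (real k + 1)))"
    by (simp add: algebra_simps)
  also have "\<dots> = Suc i * (fact (2 * k) / (2 ^ k * fact k))"
    by (subst nonzero_mult_divide_mult_cancel_right) (simp_all add: k)
  finally show ?thesis by (simp add: k integral_std_normal_moment_even)
next
  case False
  then obtain k where k: "i = 2 * k + 1" by (auto elim: oddE)
  have "Suc (Suc i) = 2 * Suc k + 1" using k by simp
  then show ?thesis
    by (simp only: k integral_std_normal_moment_odd mult_zero_right)
qed

definition normal_expectation :: "real poly \<Rightarrow> real" where
  "normal_expectation p = (\<integral>x. std_normal_density x * poly p x \<partial>lborel)"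

lemma poly_eq_sum_lessThan:
  fixes p :: "'a::comm_semiring_1 poly"
  assumes "degree p < N"
  shows "poly p x = (\<Sum>i<N. coeff p i * x ^ i)"
proof -
  have "(\<Sum>i<N. coeff p i * x ^ i) = (\<Sum>i\<le>degree p. coeff p i * x ^ i)"
    using assms by (intro sum.mono_neutral_right) (auto simp: coeff_eq_0)
  then show ?thesis by (simp add: poly_altdef)
qed

lemma std_normal_poly_eq_sum:
  assumes "degree p < N"
  shows "(\<lambda>x. std_normal_density x * poly p x)
           = (\<lambda>x. \<Sum>i<N. coeff p i * (std_normal_density x * x ^ i))"
  using assms by (simp add: poly_eq_sum_lessThan sum_distrib_left algebra_simps)

lemma integrable_std_normal_poly: "integrable lborel (\<lambda>x. std_normal_density x * poly p x)"
  by (subst std_normal_poly_eq_sum[of p "Suc (degree p)"])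
     (auto intro!: integrable_sum integrable_mult_right integrable_std_normal_moment)

lemma normal_expectation_eq_moments:
  assumes "degree p < N"
  shows "normal_expectation p = (\<Sum>i<N. coeff p i * (\<integral>x. std_normal_density x * x ^ i \<partial>lborel))"
  unfolding normal_expectation_def std_normal_poly_eq_sum[OF assms]
  by (simp add: integrable_std_normal_moment)

lemma normal_expectation_add: "normal_expectation (p + q) = normal_expectation p + normal_expectation q"
  unfolding normal_expectation_def
  using integrable_std_normal_poly[of p] integrable_std_normal_poly[of q]
  by (simp add: distrib_left)

lemma normal_expectation_diff: "normal_expectation (p - q) = normal_expectation p - normal_expectation q"
  unfolding normal_expectation_def
  using integrable_std_normal_poly[of p] integrable_std_normal_poly[of q]
  by (simp add: right_diff_distrib)

lemma normal_expectation_const: "normal_expectation [:c:] = c"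
  using normal_expectation_eq_moments[of "[:c:]" 1] integral_std_normal_moment_even[of 0] by simp

text \<open>Stein's identity \<open>E[Z p(Z)] = E[p'(Z)]\<close>, checked on monomials via the moment recursion.\<close>
lemma normal_expectation_X_mult: "normal_expectation ([:0, 1:] * p) = normal_expectation (pderiv p)"
proof -
  define D where "D = Suc (degree p)"
  define M where "M i = (\<integral>x. std_normal_density x * x ^ i \<partial>lborel)" for i
  have M_Suc_Suc: "M (Suc (Suc i)) = Suc i * M i" for i
    unfolding M_def by (rule std_normal_moment_Suc_Suc)
  have "normal_expectation ([:0, 1:] * p) = normal_expectation (pCons 0 p)"
    by simp
  also have "\<dots> = (\<Sum>i<Suc (Suc D). coeff (pCons 0 p) i * M i)"
    unfolding M_def by (rule normal_expectation_eq_moments) (use degree_pCons_le[of 0 p] in \<open>simp add: D_def\<close>)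
  also have "\<dots> = (\<Sum>i<Suc D. coeff p i * M (Suc i))"
    by (subst sum.lessThan_Suc_shift) simp
  also have "\<dots> = (\<Sum>i<D. coeff p (Suc i) * M (Suc (Suc i)))"
    using integral_std_normal_moment_odd[of 0] by (subst sum.lessThan_Suc_shift) (simp add: M_def)
  also have "\<dots> = (\<Sum>i<D. coeff (pderiv p) i * M i)"
    by (simp add: M_Suc_Suc coeff_pderiv mult_ac)
  also have "\<dots> = normal_expectation (pderiv p)"
    unfolding M_def by (rule normal_expectation_eq_moments[symmetric])
       (use degree_pderiv[of p] in \<open>simp add: D_def\<close>)
  finally show ?thesis .
qed

lemma normal_expectation_He_mult: "normal_expectation (He m * p) = normal_expectation ((pderiv ^^ m) p)"
proof (induction m arbitrary: p)
  case (Suc m)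
  have "He (Suc m) * p = [:0, 1:] * (He m * p) - pderiv (He m) * p"
    by (simp add: He_Suc[of m] algebra_simps del: He.simps)
  then have "normal_expectation (He (Suc m) * p)
      = normal_expectation (pderiv (He m * p)) - normal_expectation (pderiv (He m) * p)"
    by (simp only: normal_expectation_diff normal_expectation_X_mult)
  also have "\<dots> = normal_expectation (He m * pderiv p)"
    by (simp add: pderiv_mult normal_expectation_add mult.commute del: He.simps)
  also have "\<dots> = normal_expectation ((pderiv ^^ Suc m) p)"
    by (simp only: Suc.IH funpow_Suc_right o_apply)
  finally show ?case .
qed simp

lemma higher_pderiv_degree_le:
  fixes q :: "'a::{idom, semiring_char_0} poly"
  assumes "degree q \<le> m"
  shows "(pderiv ^^ m) q = [:fact m * coeff q m:]"
proof -
  have "degree ((pderiv ^^ m) q) = 0"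
    using assms by (simp add: degree_higher_pderiv)
  then have "(pderiv ^^ m) q = [:coeff ((pderiv ^^ m) q) 0:]"
    by (metis degree_0_id)
  also have "coeff ((pderiv ^^ m) q) 0 = fact m * coeff q m"
    by (simp add: coeff_higher_pderiv pochhammer_fact)
  finally show ?thesis .
qed

lemma normal_expectation_He_He: "normal_expectation (He m * He m') = (if m = m' then fact m else 0)"
proof -
  have orth: "normal_expectation (He m * He m') = (if m = m' then fact m else 0)" if "m' \<le> m" for m m'
    using that degree_He[of m'] coeff_He_self[of m]
    by (auto simp: normal_expectation_He_mult higher_pderiv_degree_le normal_expectation_const
        coeff_eq_0 simp del: He.simps)
  show ?thesis
    using orth[of m' m] orth[of m m'] by (cases "m' \<le> m") (auto simp: mult.commute simp del: He.simps)
qed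

lemma normal_expectation_square_pos:
  assumes "p \<noteq> 0"
  shows "normal_expectation (p * p) > 0"
proof -
  let ?f = "\<lambda>x. std_normal_density x * poly (p * p) x"
  have std_normal_density_neq_0: "std_normal_density x \<noteq> 0" for x
    using normal_density_pos[of 1 0 x] by simp
  have nonneg: "AE x in lborel. 0 \<le> ?f x"
    by simp
  have "normal_expectation (p * p) \<noteq> 0"
  proof
    assume "normal_expectation (p * p) = 0"
    then have "AE x in lborel. ?f x = 0"
      using integral_nonneg_eq_0_iff_AE[OF integrable_std_normal_poly nonneg]
      by (simp add: normal_expectation_def)
    moreover have "AE x in lborel. x \<notin> {x. poly p x = 0}"
      using poly_roots_finite[OF assms] by (intro AE_not_in finite_imp_null_set_lborel)
    ultimately have "AE x in lborel. ?f x = 0 \<and> x \<notin> {x. poly p x = 0}"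
      by (rule eventually_conj)
    then have "AE x::real in lborel. False"
      by (rule eventually_mono) (simp add: std_normal_density_neq_0)
    then show False
      by (simp add: eventually_False ae_filter_eq_bot_iff)
  qed
  moreover have "normal_expectation (p * p) \<ge> 0"
    unfolding normal_expectation_def by (rule integral_nonneg_AE[OF nonneg])
  ultimately show ?thesis by simp
qed

lemma ndens_eq_std_normal_density: "ndens = std_normal_density"
  by (simp add: fun_eq_iff ndens_def std_normal_density_def)

lemma
  shows absolutely_integrable_poly_ndens: "(\<lambda>t. poly q t * ndens t) absolutely_integrable_on UNIV"
    and integral_poly_ndens: "integral UNIV (\<lambda>t. poly q t * ndens t) = normal_expectation q"
proof -
  have int: "integrable lborel (\<lambda>t. poly q t * ndens t)"
    using integrable_std_normal_poly[of q] by (simp add: ndens_eq_std_normal_density mult.commute)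
  then show "(\<lambda>t. poly q t * ndens t) absolutely_integrable_on UNIV"
    by (simp add: absolutely_integrable_on_def integrable_on_lborel integrable_norm)
  show "integral UNIV (\<lambda>t. poly q t * ndens t) = normal_expectation q"
    using integral_lborel[OF int]
    by (simp add: normal_expectation_def ndens_eq_std_normal_density mult.commute)
qed

section \<open>Gauss quadrature for a positive functional\<close>

lemma gauss_quadrature_nodes_distinct:
  fixes L :: "real poly \<Rightarrow> real"
  assumes pos: "\<And>p. p \<noteq> 0 \<Longrightarrow> L (p * p) > 0"
    and exact: "\<And>q. degree q \<le> 2 * n - 1 \<Longrightarrow> (\<Sum>k = 1..n. h k * poly q (z k)) = L q"
  shows "inj_on z {1..n}"
proof (rule ccontr)
  assume "\<not> inj_on z {1..n}"
  then have card: "card (z ` {1..n}) < n"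
    using card_image_le[of "{1..n}" z] inj_on_iff_eq_card[of "{1..n}" z] by simp
  define P where "P = (\<Prod>s\<in>z ` {1..n}. [:-s, 1:])"
  have "P \<noteq> 0"
    by (simp add: P_def)
  have "degree P \<le> card (z ` {1..n})"
    unfolding P_def using degree_prod_sum_le[of "z ` {1..n}" "\<lambda>s. [:-s, 1:]"] by simp
  then have "degree (P * P) \<le> 2 * n - 1"
    using degree_mult_le[of P P] card by simp
  then have "L (P * P) = (\<Sum>k = 1..n. h k * poly (P * P) (z k))"
    by (rule exact[symmetric])
  also have "\<dots> = 0"
    by (intro sum.neutral) (simp add: P_def poly_prod prod_zero_iff)
  finally have "L (P * P) = 0" .
  with pos[OF \<open>P \<noteq> 0\<close>] show False by simp
qed

lemma poly_pderiv_at_root: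
  fixes p :: "'a::idom poly"
  assumes "poly p c = 0"
  shows "poly (pderiv p) c = poly (synthetic_div p c) c"
proof -
  define r where "r = synthetic_div p c"
  have "p = [:-c, 1:] * r"
    using synthetic_div_correct'[of c p] assms by (simp add: r_def)
  then have "pderiv p = r + [:-c, 1:] * pderiv r"
    by (simp add: pderiv_mult pderiv_pCons pderiv_diff pderiv_smult)
  then show ?thesis
    by (simp add: r_def)
qed

lemma gauss_quadrature_weight:
  fixes L :: "real poly \<Rightarrow> real"
  assumes pos: "\<And>p. p \<noteq> 0 \<Longrightarrow> L (p * p) > 0"
    and exact: "\<And>q. degree q \<le> 2 * n - 1 \<Longrightarrow> (\<Sum>k = 1..n. h k * poly q (z k)) = L q"
    and "degree p = n" and nodes: "\<And>j. j \<in> {1..n} \<Longrightarrow> poly p (z j) = 0"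
    and k: "k \<in> {1..n}"
  shows "h k = L (synthetic_div p (z k)) / poly (pderiv p) (z k)"
proof -
  define r where "r = synthetic_div p (z k)"
  have p_eq: "p = [:-z k, 1:] * r"
    using synthetic_div_correct'[of "z k" p] nodes[OF k] by (simp add: r_def)
  have "r \<noteq> 0" "degree r = n - 1"
    using k \<open>degree p = n\<close> by (auto simp: r_def synthetic_div_eq_0_iff degree_synthetic_div)
  have r_nodes: "poly r (z j) = 0" if "j \<in> {1..n}" "j \<noteq> k" for j
  proof -
    have "z j \<noteq> z k"
      using gauss_quadrature_nodes_distinct[OF pos exact] that k by (auto dest: inj_onD)
    then show ?thesis
      using nodes[OF that(1)] p_eq by simp
  qed
  have L_r_mult: "L (r * s) = h k * poly (r * s) (z k)" if "degree s \<le> n" for s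
  proof -
    have "degree (r * s) \<le> 2 * n - 1"
      using degree_mult_le[of r s] that \<open>degree r = n - 1\<close> k by simp
    then have "L (r * s) = (\<Sum>j = 1..n. h j * poly (r * s) (z j))"
      by (rule exact[symmetric])
    also have "\<dots> = h k * poly (r * s) (z k)"
      using k r_nodes by (subst sum.mono_neutral_right[of "{1..n}" "{k}"]) auto
    finally show ?thesis .
  qed
  have "poly r (z k) \<noteq> 0"
    using L_r_mult[of r] pos[OF \<open>r \<noteq> 0\<close>] \<open>degree r = n - 1\<close> by auto
  moreover have "poly (pderiv p) (z k) = poly r (z k)"
    using poly_pderiv_at_root nodes[OF k] by (simp add: r_def)
  ultimately show "h k = L r / poly (pderiv p) (z k)"
    using L_r_mult[of 1] by simp
qed

section \<open>The substitution \<open>z = \<phi>\<^sub>\<sigma>(x)\<close>\<close>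

lemma phi_inv_eq_square:
  assumes "\<sigma> > 0"
  shows "phi_inv \<sigma> z = (z / (2 * \<sigma>) + sqrt (1 + (z / (2 * \<sigma>))\<^sup>2))\<^sup>2"
proof -
  define u where "u = z / (2 * \<sigma>)"
  have "z\<^sup>2 / (2 * \<sigma>\<^sup>2) = 2 * u\<^sup>2" "z\<^sup>2 / (4 * \<sigma>\<^sup>2) = u\<^sup>2" "z / \<sigma> = 2 * u"
    using assms by (simp_all add: u_def field_simps power2_eq_square)
  then have "phi_inv \<sigma> z = 1 + 2 * u\<^sup>2 + 2 * u * sqrt (1 + u\<^sup>2)"
    by (simp add: phi_inv_def)
  also have "\<dots> = (u + sqrt (1 + u\<^sup>2))\<^sup>2"
    by (simp add: power2_eq_square algebra_simps)
  finally show ?thesis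
    by (simp add: u_def)
qed

lemma plus_sqrt_one_plus_square_pos: "u + sqrt (1 + u\<^sup>2) > (0::real)"
proof -
  have "\<bar>u\<bar> < sqrt (1 + u\<^sup>2)"
    by (rule real_less_rsqrt) simp
  then show ?thesis by linarith
qed

lemma phi_inv_pos: "\<sigma> > 0 \<Longrightarrow> phi_inv \<sigma> z > 0"
  unfolding phi_inv_eq_square by (intro zero_less_power plus_sqrt_one_plus_square_pos)

lemma phi_phi_inv:
  assumes "\<sigma> > 0"
  shows "phi \<sigma> (phi_inv \<sigma> z) = z"
proof -
  define u where "u = z / (2 * \<sigma>)"
  define r where "r = sqrt (1 + u\<^sup>2)"
  have pos: "u + r > 0"
    using plus_sqrt_one_plus_square_pos by (simp add: r_def)
  have "sqrt (phi_inv \<sigma> z) = u + r"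
    using pos assms by (simp add: phi_inv_eq_square u_def r_def)
  moreover have "1 / (u + r) = r - u"
    using pos by (simp add: r_def field_simps power2_eq_square algebra_simps)
  ultimately show ?thesis
    using assms by (simp add: phi_def u_def)
qed

lemma phi_inv_phi:
  assumes "\<sigma> > 0" "x > 0"
  shows "phi_inv \<sigma> (phi \<sigma> x) = x"
proof -
  define s where "s = sqrt x"
  have "s > 0"
    using assms by (simp add: s_def)
  have u: "phi \<sigma> x / (2 * \<sigma>) = (s - 1 / s) / 2"
    using assms by (simp add: phi_def s_def)
  have r: "sqrt (1 + ((s - 1 / s) / 2)\<^sup>2) = (s + 1 / s) / 2"
  proof (rule real_sqrt_unique)
    show "((s + 1 / s) / 2)\<^sup>2 = 1 + ((s - 1 / s) / 2)\<^sup>2"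
      using \<open>s > 0\<close> by (simp add: field_simps power2_eq_square)
  qed (use \<open>s > 0\<close> in simp)
  have "phi_inv \<sigma> (phi \<sigma> x) = ((s - 1 / s) / 2 + (s + 1 / s) / 2)\<^sup>2"
    unfolding phi_inv_eq_square[OF assms(1)] u r ..
  also have "\<dots> = s\<^sup>2"
    by (simp add: field_simps)
  finally show ?thesis
    using assms by (simp add: s_def)
qed

lemma bij_betw_phi: "\<sigma> > 0 \<Longrightarrow> bij_betw (phi \<sigma>) {0<..} UNIV"
  by (rule bij_betw_byWitness[where f' = "phi_inv \<sigma>"]) (auto simp: phi_inv_phi phi_phi_inv phi_inv_pos)

definition phi_deriv :: "real \<Rightarrow> real \<Rightarrow> real" where
  "phi_deriv \<sigma> x = \<sigma> * (1 + x) / (2 * x * sqrt x)"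

lemma phi_has_real_derivative:
  assumes "x > 0"
  shows "(phi \<sigma> has_real_derivative phi_deriv \<sigma> x) (at x)"
proof -
  have "((\<lambda>x. \<sigma> * (sqrt x - 1 / sqrt x)) has_real_derivative
        \<sigma> * (inverse (sqrt x) / 2 - (- (inverse (sqrt x) / 2) / (sqrt x * sqrt x)))) (at x)"
    using assms by (auto intro!: derivative_eq_intros)
  moreover have "\<sigma> * (inverse (sqrt x) / 2 - (- (inverse (sqrt x) / 2) / (sqrt x * sqrt x)))
      = phi_deriv \<sigma> x"
    using assms by (simp add: phi_deriv_def field_simps)
  ultimately show ?thesis
    by (simp add: phi_def[abs_def])
qed

lemma phi_deriv_pos: "\<sigma> > 0 \<Longrightarrow> x > 0 \<Longrightarrow> phi_deriv \<sigma> x > 0"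
  by (simp add: phi_deriv_def)

lemma deriv_phi_div_deriv_G:
  assumes "\<sigma> > 0" "x > 0"
  shows "deriv (phi \<sigma>) x / deriv (G \<sigma> m) x = 1 / poly (pderiv (He m)) (phi \<sigma> x)"
proof -
  have "(G \<sigma> m has_real_derivative poly (pderiv (He m)) (phi \<sigma> x) * phi_deriv \<sigma> x) (at x)"
    unfolding G_def[abs_def] by (rule DERIV_chain2[OF poly_DERIV phi_has_real_derivative[OF assms(2)]])
  then have "deriv (G \<sigma> m) x = poly (pderiv (He m)) (phi \<sigma> x) * phi_deriv \<sigma> x"
    by (rule DERIV_imp_deriv)
  moreover have "deriv (phi \<sigma>) x = phi_deriv \<sigma> x"
    by (rule DERIV_imp_deriv[OF phi_has_real_derivative[OF assms(2)]])
  ultimately show ?thesis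
    using phi_deriv_pos[OF assms] by simp
qed

lemma wt_eq_phi_deriv_ndens:
  assumes "\<sigma> > 0" "x > 0"
  shows "wt \<sigma> x = phi_deriv \<sigma> x * ndens (phi \<sigma> x)"
proof -
  define s where "s = sqrt x"
  have "s > 0" "x = s\<^sup>2"
    using assms by (simp_all add: s_def)
  then have sqrt_eq: "sqrt (2 * pi * x ^ 3) = sqrt (2 * pi) * (x * s)"
    by (simp add: real_sqrt_mult power_mult_distrib power2_eq_square power3_eq_cube)
  have exp_eq: "- ((\<sigma> * x - \<sigma>)\<^sup>2) / (2 * x) = - ((phi \<sigma> x)\<^sup>2) / 2"
    using \<open>s > 0\<close> \<open>x = s\<^sup>2\<close> by (simp add: phi_def s_def[symmetric] field_simps power2_eq_square)
  show ?thesis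
    unfolding wt_def f_IG_def ndens_def phi_deriv_def sqrt_eq exp_eq s_def[symmetric]
    using \<open>s > 0\<close> assms by (simp add: field_simps)
qed

lemma has_integral_poly_phi:
  assumes "\<sigma> > 0"
  shows "((\<lambda>x. poly q (phi \<sigma> x) * wt \<sigma> x) has_integral normal_expectation q) {0<..}"
proof -
  let ?f = "\<lambda>t. poly q t * ndens t"
  have inj: "inj_on (phi \<sigma>) {0<..}" and img: "phi \<sigma> ` {0<..} = UNIV"
    using bij_betw_phi[OF assms] by (simp_all add: bij_betw_def)
  have "(\<lambda>x. \<bar>phi_deriv \<sigma> x\<bar> * ?f (phi \<sigma> x)) absolutely_integrable_on {0<..} \<and>
        integral {0<..} (\<lambda>x. \<bar>phi_deriv \<sigma> x\<bar> * ?f (phi \<sigma> x)) = normal_expectation q"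
    using has_absolute_integral_change_of_variables_1'[of "{0<..}" "phi \<sigma>" "phi_deriv \<sigma>" ?f "normal_expectation q"]
      phi_has_real_derivative inj img absolutely_integrable_poly_ndens integral_poly_ndens
    by (auto intro: has_field_derivative_at_within)
  then have "((\<lambda>x. \<bar>phi_deriv \<sigma> x\<bar> * ?f (phi \<sigma> x)) has_integral normal_expectation q) {0<..}"
    using set_lebesgue_integral_eq_integral(1) integrable_integral by metis
  moreover have "\<bar>phi_deriv \<sigma> x\<bar> * ?f (phi \<sigma> x) = poly q (phi \<sigma> x) * wt \<sigma> x" if "x \<in> {0<..}" for x
    using that phi_deriv_pos[OF assms, of x] wt_eq_phi_deriv_ndens[OF assms, of x] by simp
  ultimately show ?thesis
    using has_integral_cong by (metis (no_types, lifting))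
qed

lemma has_integral_pullback_phi:
  assumes "\<sigma> > 0" and "\<And>t. g (phi_inv \<sigma> t) = poly q t"
  shows "((\<lambda>x. g x * wt \<sigma> x) has_integral normal_expectation q) {0<..}"
proof -
  have "poly q (phi \<sigma> x) * wt \<sigma> x = g x * wt \<sigma> x" if "x \<in> {0<..}" for x
    using assms(2)[of "phi \<sigma> x"] phi_inv_phi[OF assms(1)] that by simp
  then show ?thesis
    using has_integral_poly_phi[OF assms(1), of q] has_integral_cong by (metis (no_types, lifting))
qed

lemma G_orthonormal:
  assumes "\<sigma> > 0"
  shows "((\<lambda>x. G \<sigma> m x * G \<sigma> m' x * wt \<sigma> x) has_integral (if m = m' then fact m else 0)) {0<..}"
  using has_integral_poly_phi[OF assms, of "He m * He m'"]
  by (simp add: G_def normal_expectation_He_He del: He.simps)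

lemma roots_poly_phi:
  assumes "\<sigma> > 0"
  shows "{x \<in> {0<..}. poly p (phi \<sigma> x) = 0} = phi_inv \<sigma> ` {t. poly p t = 0}"
proof
  show "{x \<in> {0<..}. poly p (phi \<sigma> x) = 0} \<subseteq> phi_inv \<sigma> ` {t. poly p t = 0}"
  proof
    fix x
    assume "x \<in> {x \<in> {0<..}. poly p (phi \<sigma> x) = 0}"
    then show "x \<in> phi_inv \<sigma> ` {t. poly p t = 0}"
      using phi_inv_phi[OF assms] by (intro image_eqI[of x _ "phi \<sigma> x"]) auto
  qed
  show "phi_inv \<sigma> ` {t. poly p t = 0} \<subseteq> {x \<in> {0<..}. poly p (phi \<sigma> x) = 0}"
    using phi_inv_pos[OF assms] phi_phi_inv[OF assms] by auto
qed

lemma poly_eq_times_synthetic_div: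
  fixes p :: "'a::comm_ring_1 poly"
  assumes "poly p c = 0"
  shows "poly p x = (x - c) * poly (synthetic_div p c) x"
  using arg_cong[OF synthetic_div_correct'[of c p], of "\<lambda>q. poly q x"] assms
  by (simp add: algebra_simps)

lemma has_integral_poly_phi_divided:
  assumes "\<sigma> > 0" and "poly p c = 0"
  shows "((\<lambda>x. poly p (phi \<sigma> x) / (phi \<sigma> x - c) * wt \<sigma> x)
           has_integral normal_expectation (synthetic_div p c)) {0<..}"
proof (rule has_integral_spike[OF negligible_sing _ has_integral_poly_phi[OF assms(1)]])
  fix x
  assume "x \<in> {0<..} - {phi_inv \<sigma> c}"
  then have "phi \<sigma> x \<noteq> c"
    using phi_inv_phi[OF assms(1)] by auto
  then show "poly p (phi \<sigma> x) / (phi \<sigma> x - c) * wt \<sigma> x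
      = poly (synthetic_div p c) (phi \<sigma> x) * wt \<sigma> x"
    using poly_eq_times_synthetic_div[OF assms(2)] by simp
qed

lemma G_christoffel_formula:
  assumes "\<sigma> > 0" and "poly (He n) c = 0"
    and "h = normal_expectation (synthetic_div (He n) c) / poly (pderiv (He n)) c"
  shows "\<exists>I. ((\<lambda>x. G \<sigma> n x / (phi \<sigma> x - phi \<sigma> (phi_inv \<sigma> c)) * wt \<sigma> x) has_integral I) {0<..}
      \<and> h = deriv (phi \<sigma>) (phi_inv \<sigma> c) / deriv (G \<sigma> n) (phi_inv \<sigma> c) * I"
proof (intro exI conjI)
  show "((\<lambda>x. G \<sigma> n x / (phi \<sigma> x - phi \<sigma> (phi_inv \<sigma> c)) * wt \<sigma> x)
      has_integral normal_expectation (synthetic_div (He n) c)) {0<..}"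
    using has_integral_poly_phi_divided[OF assms(1,2)] by (simp add: G_def phi_phi_inv[OF assms(1)])
  show "h = deriv (phi \<sigma>) (phi_inv \<sigma> c) / deriv (G \<sigma> n) (phi_inv \<sigma> c)
      * normal_expectation (synthetic_div (He n) c)"
    using assms(3) by (simp add: deriv_phi_div_deriv_G[OF assms(1) phi_inv_pos[OF assms(1)]] phi_phi_inv[OF assms(1)])
qed

theorem lemma2:
  fixes \<sigma> :: real and n :: nat and z h :: "nat \<Rightarrow> real"
  assumes "\<sigma> > 0" and "n \<ge> 1"
    and roots: "z ` {1..n} = {t. poly (He n) t = 0}"
    and weights: "\<And>q :: real poly. degree q \<le> 2 * n - 1 \<Longrightarrow>
        (\<Sum>k = 1..n. h k * poly q (z k)) = integral UNIV (\<lambda>t. poly q t * ndens t)"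
  shows "(\<forall>m m'. ((\<lambda>x. G \<sigma> m x * G \<sigma> m' x * wt \<sigma> x) has_integral
                       (if m = m' then fact m else 0)) {0<..})
    \<and> {x \<in> {0<..}. G \<sigma> n x = 0} = (\<lambda>k. phi_inv \<sigma> (z k)) ` {1..n}
    \<and> (\<forall>k \<in> {1..n}. \<exists>I. ((\<lambda>x. G \<sigma> n x / (phi \<sigma> x - phi \<sigma> (phi_inv \<sigma> (z k))) * wt \<sigma> x)
                              has_integral I) {0<..}
           \<and> h k = deriv (phi \<sigma>) (phi_inv \<sigma> (z k)) / deriv (G \<sigma> n) (phi_inv \<sigma> (z k)) * I)
    \<and> (\<forall>g :: real \<Rightarrow> real. (\<exists>q :: real poly. degree q \<le> 2 * n - 1
              \<and> (\<forall>t. g (phi_inv \<sigma> t) = poly q t))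
         \<longrightarrow> ((\<lambda>x. g x * wt \<sigma> x) has_integral (\<Sum>k = 1..n. h k * g (phi_inv \<sigma> (z k)))) {0<..})"
proof -
  note \<sigma> = \<open>\<sigma> > 0\<close>
  have exact: "(\<Sum>k = 1..n. h k * poly q (z k)) = normal_expectation q" if "degree q \<le> 2 * n - 1" for q
    using weights[OF that] by (simp add: integral_poly_ndens)
  have nodes: "poly (He n) (z k) = 0" if "k \<in> {1..n}" for k
    using roots that by blast
  have "{x \<in> {0<..}. G \<sigma> n x = 0} = (\<lambda>k. phi_inv \<sigma> (z k)) ` {1..n}"
    using roots_poly_phi[OF \<sigma>, of "He n"] by (simp add: G_def image_image flip: roots)
  moreover have "\<exists>I. ((\<lambda>x. G \<sigma> n x / (phi \<sigma> x - phi \<sigma> (phi_inv \<sigma> (z k))) * wt \<sigma> x) has_integral I) {0<..}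
      \<and> h k = deriv (phi \<sigma>) (phi_inv \<sigma> (z k)) / deriv (G \<sigma> n) (phi_inv \<sigma> (z k)) * I"
    if "k \<in> {1..n}" for k
    using G_christoffel_formula[OF \<sigma> nodes[OF that]]
      gauss_quadrature_weight[OF normal_expectation_square_pos exact degree_He nodes that] by blast
  moreover have "((\<lambda>x. g x * wt \<sigma> x) has_integral (\<Sum>k = 1..n. h k * g (phi_inv \<sigma> (z k)))) {0<..}"
    if "degree q \<le> 2 * n - 1" "\<forall>t. g (phi_inv \<sigma> t) = poly q t" for g q
    using has_integral_pullback_phi[OF \<sigma>, of g q] exact[OF that(1)] that(2) by simp
  ultimately show ?thesis
    using G_orthonormal[OF \<sigma>] by (intro conjI allI ballI impI; (elim exE conjE)?; blast)
qed

end
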